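(* Let $T$ be a strongly consistent $\mathcal{L}$-theory in $RGL^*$. Then $T$ is maximally strongly consistent if and only if (1) for all $\mathcal{L}$-sentences $\varphi,\psi$, either $\varphi\to\psi\in T$ or $\psi\to\varphi\in T$; and (2) whenever $\varphi$ is an $\mathcal{L}$-sentence with $T\vdash\bar r\to\varphi$ for all rationals $r\in(0,1]$, then $\varphi\in T$.
   Context: $\mathcal{L}$ is a first-order language with countably many predicate, function and constant symbols. Formulas of $RGL^*$ are built from atomic formulas and the nullary connectives $\bar r$ ($r\in[0,1]\cap\mathbb{Q}$, including $\bar0,\bar1$) by $\wedge,\to,\forall,\exists$; $\neg\varphi:=\varphi\to\bar1$, $\varphi\vee\psi:=((\varphi\to\psi)\to\psi)\wedge((\psi\to\varphi)\to\varphi)$, $\varphi\leftrightarrow\psi:=(\varphi\to\psi)\wedge(\psi\to\varphi)$. Proof system $\vdash$: all instances of (G1) $(\varphi\to\psi)\to((\psi\to\chi)\to(\varphi\to\chi))$; (G2) $(\varphi\wedge\psi)\to\varphi$; (G3) $(\varphi\wedge\psi)\to(\psi\wedge\varphi)$; (G4) $\varphi\to(\varphi\wedge\varphi)$; (G5) $(\varphi\to(\psi\to\chi))\leftrightarrow((\varphi\wedge\psi)\to\chi)$; (G6) $((\varphi\to\psi)\to\chi)\to(((\psi\to\varphi)\to\chi)\to\chi)$; (G7) $\bar1\to\varphi$; (G$\forall$1) $(\forall x\,\varphi(x))\to\varphi(t)$; (G$\forall$2) $\forall x(\psi\to\varphi(x))\to(\psi\to\forall x\,\varphi(x))$; (G$\forall$3)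 $\forall x(\psi\vee\varphi(x))\to(\psi\vee\forall x\,\varphi(x))$; (G$\exists$1) $\varphi(t)\to\exists x\,\varphi(x)$; (G$\exists$2) $\exists x(\psi\to\varphi(x))\to(\psi\to\exists x\,\varphi(x))$ (with $t$ substitutable for $x$ and $x$ not free in $\psi$); (RGL1) $(\bar r\wedge\bar s)\leftrightarrow\overline{\max\{r,s\}}$; (RGL2) $\bar r\to\bar s$ if $r\ge s$, $(\bar r\to\bar s)\leftrightarrow\bar s$ if $r<s$; (RGL3) $\neg\neg\bar r$ for $r<1$. Rules: modus ponens and generalization. A theory $T$ is strongly consistent if $T\nvdash\bar r$ for every rational $r\in(0,1]$; it is maximally strongly consistent if it is strongly consistent and every strongly consistent $\mathcal{L}$-theory $\Sigma\supseteq T$ equals $T$. *)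

theory Defs
  imports Main "HOL-Library.Countable"
begin

typedef qunit = "{r::rat. 0 \<le> r \<and> r \<le> 1}"
  by (rule exI[of _ 0]) auto

definition qone :: qunit where "qone = Abs_qunit 1"

definition qmax :: "qunit \<Rightarrow> qunit \<Rightarrow> qunit" where
  "qmax r s = (if Rep_qunit r \<le> Rep_qunit s then s else r)"

text \<open>Function symbols of type 'f (constants are 0-ary function symbols), predicate
  symbols of type 'p; both countable. Variables are natural numbers.\<close>

datatype 'f tm = Var nat | Fn 'f "'f tm list"

datatype ('p, 'f) fm =
    Atom 'p "'f tm list"
  | Cst qunit
  | Conj "('p, 'f) fm" "('p, 'f) fm"
  | Imp "('p, 'f) fm" "('p, 'f) fm"
  | All nat "('p, 'f) fm"
  | Ex nat "('p, 'f) fm"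

definition Neg :: "('p, 'f) fm \<Rightarrow> ('p, 'f) fm" where
  "Neg \<phi> = Imp \<phi> (Cst qone)"

definition Disj :: "('p, 'f) fm \<Rightarrow> ('p, 'f) fm \<Rightarrow> ('p, 'f) fm" where
  "Disj \<phi> \<psi> = Conj (Imp (Imp \<phi> \<psi>) \<psi>) (Imp (Imp \<psi> \<phi>) \<phi>)"

definition Iff :: "('p, 'f) fm \<Rightarrow> ('p, 'f) fm \<Rightarrow> ('p, 'f) fm" where
  "Iff \<phi> \<psi> = Conj (Imp \<phi> \<psi>) (Imp \<psi> \<phi>)"

fun fvt :: "'f tm \<Rightarrow> nat set" where
  "fvt (Var x) = {x}"
| "fvt (Fn f ts) = (\<Union>t\<in>set ts. fvt t)"

fun fv :: "('p, 'f) fm \<Rightarrow> nat set" where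
  "fv (Atom p ts) = (\<Union>t\<in>set ts. fvt t)"
| "fv (Cst r) = {}"
| "fv (Conj \<phi> \<psi>) = fv \<phi> \<union> fv \<psi>"
| "fv (Imp \<phi> \<psi>) = fv \<phi> \<union> fv \<psi>"
| "fv (All x \<phi>) = fv \<phi> - {x}"
| "fv (Ex x \<phi>) = fv \<phi> - {x}"

definition sentence :: "('p, 'f) fm \<Rightarrow> bool" where
  "sentence \<phi> \<longleftrightarrow> fv \<phi> = {}"

fun substt :: "nat \<Rightarrow> 'f tm \<Rightarrow> 'f tm \<Rightarrow> 'f tm" where
  "substt x t (Var y) = (if y = x then t else Var y)"
| "substt x t (Fn f ts) = Fn f (map (substt x t) ts)"

text \<open>Substitution of t for the free occurrences of x (no renaming).\<close>
fun subst :: "nat \<Rightarrow> 'f tm \<Rightarrow> ('p, 'f) fm \<Rightarrow> ('p, 'f) fm" where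
  "subst x t (Atom p ts) = Atom p (map (substt x t) ts)"
| "subst x t (Cst r) = Cst r"
| "subst x t (Conj \<phi> \<psi>) = Conj (subst x t \<phi>) (subst x t \<psi>)"
| "subst x t (Imp \<phi> \<psi>) = Imp (subst x t \<phi>) (subst x t \<psi>)"
| "subst x t (All y \<phi>) = (if y = x then All y \<phi> else All y (subst x t \<phi>))"
| "subst x t (Ex y \<phi>) = (if y = x then Ex y \<phi> else Ex y (subst x t \<phi>))"

fun substitutable :: "nat \<Rightarrow> 'f tm \<Rightarrow> ('p, 'f) fm \<Rightarrow> bool" where
  "substitutable x t (Atom p ts) = True"
| "substitutable x t (Cst r) = True"
| "substitutable x t (Conj \<phi> \<psi>) = (substitutable x t \<phi> \<and> substitutable x t \<psi>)"
| "substitutable x t (Imp \<phi> \<psi>) = (substitutable x t \<phi> \<and> substitutable x t \<psi>)"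
| "substitutable x t (All y \<phi>) =
     (x \<notin> fv (All y \<phi>) \<or> (y \<notin> fvt t \<and> substitutable x t \<phi>))"
| "substitutable x t (Ex y \<phi>) =
     (x \<notin> fv (Ex y \<phi>) \<or> (y \<notin> fvt t \<and> substitutable x t \<phi>))"

inductive axiom :: "('p, 'f) fm \<Rightarrow> bool" where
  G1: "axiom (Imp (Imp \<phi> \<psi>) (Imp (Imp \<psi> \<chi>) (Imp \<phi> \<chi>)))"
| G2: "axiom (Imp (Conj \<phi> \<psi>) \<phi>)"
| G3: "axiom (Imp (Conj \<phi> \<psi>) (Conj \<psi> \<phi>))"
| G4: "axiom (Imp \<phi> (Conj \<phi> \<phi>))"
| G5: "axiom (Iff (Imp \<phi> (Imp \<psi> \<chi>)) (Imp (Conj \<phi> \<psi>) \<chi>))"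
| G6: "axiom (Imp (Imp (Imp \<phi> \<psi>) \<chi>) (Imp (Imp (Imp \<psi> \<phi>) \<chi>) \<chi>))"
| G7: "axiom (Imp (Cst qone) \<phi>)"
| GAll1: "substitutable x t \<phi> \<Longrightarrow> axiom (Imp (All x \<phi>) (subst x t \<phi>))"
| GAll2: "x \<notin> fv \<psi> \<Longrightarrow> axiom (Imp (All x (Imp \<psi> \<phi>)) (Imp \<psi> (All x \<phi>)))"
| GAll3: "x \<notin> fv \<psi> \<Longrightarrow> axiom (Imp (All x (Disj \<psi> \<phi>)) (Disj \<psi> (All x \<phi>)))"
| GEx1: "substitutable x t \<phi> \<Longrightarrow> axiom (Imp (subst x t \<phi>) (Ex x \<phi>))"
| GEx2: "x \<notin> fv \<psi> \<Longrightarrow> axiom (Imp (Ex x (Imp \<psi> \<phi>)) (Imp \<psi> (Ex x \<phi>)))"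
| RGL1: "axiom (Iff (Conj (Cst r) (Cst s)) (Cst (qmax r s)))"
| RGL2a: "Rep_qunit r \<ge> Rep_qunit s \<Longrightarrow> axiom (Imp (Cst r) (Cst s))"
| RGL2b: "Rep_qunit r < Rep_qunit s \<Longrightarrow> axiom (Iff (Imp (Cst r) (Cst s)) (Cst s))"
| RGL3: "Rep_qunit r < 1 \<Longrightarrow> axiom (Neg (Neg (Cst r)))"

inductive derivable :: "('p, 'f) fm set \<Rightarrow> ('p, 'f) fm \<Rightarrow> bool" (infix "\<turnstile>" 55)
  for T :: "('p, 'f) fm set" where
  ax: "axiom \<phi> \<Longrightarrow> T \<turnstile> \<phi>"
| hyp: "\<phi> \<in> T \<Longrightarrow> T \<turnstile> \<phi>"
| mp: "T \<turnstile> \<phi> \<Longrightarrow> T \<turnstile> Imp \<phi> \<psi> \<Longrightarrow> T \<turnstile> \<psi>"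
| gen: "T \<turnstile> \<phi> \<Longrightarrow> T \<turnstile> All x \<phi>"

definition is_theory :: "('p, 'f) fm set \<Rightarrow> bool" where
  "is_theory T \<longleftrightarrow> (\<forall>\<phi>\<in>T. sentence \<phi>)"

definition strongly_consistent :: "('p, 'f) fm set \<Rightarrow> bool" where
  "strongly_consistent T \<longleftrightarrow> (\<forall>r. 0 < Rep_qunit r \<longrightarrow> \<not> T \<turnstile> Cst r)"

definition max_strongly_consistent :: "('p, 'f) fm set \<Rightarrow> bool" where
  "max_strongly_consistent T \<longleftrightarrow> strongly_consistent T \<and>
     (\<forall>\<Sigma>. is_theory \<Sigma> \<longrightarrow> strongly_consistent \<Sigma> \<longrightarrow> T \<subseteq> \<Sigma> \<longrightarrow> \<Sigma> = T)"

end

theory Submission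
  imports Defs
begin

text \<open>If T is maximal and the sentence \<chi> is not in T, then adding \<chi> derives some
  \<open>r\<close> with \<open>r > 0\<close>, so by the deduction theorem \<open>T \<turnstile> \<chi> \<rightarrow> r\<close>. Prelinearity (G6) then
  forbids both \<open>\<phi> \<rightarrow> \<psi>\<close> and \<open>\<psi> \<rightarrow> \<phi>\<close> to be missing, and if \<open>T \<turnstile> r \<rightarrow> \<phi>\<close> for all
  \<open>r > 0\<close> but \<open>T \<turnstile> \<phi> \<rightarrow> q\<close>, a rational \<open>r < q\<close> yields \<open>T \<turnstile> r \<rightarrow> q\<close>, which by RGL2
  is \<open>q\<close> itself. Conversely, if \<open>\<phi>\<close> lies in a strongly consistent extension, then
  \<open>\<phi> \<rightarrow> r\<close> cannot be in T for \<open>r > 0\<close>, so linearity puts \<open>r \<rightarrow> \<phi>\<close> into T for every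
  such r, and the second condition puts \<open>\<phi>\<close> into T.\<close>

lemma derivable_conjD1: "T \<turnstile> Conj \<phi> \<psi> \<Longrightarrow> T \<turnstile> \<phi>"
  by (meson axiom.G2 derivable.ax derivable.mp)

lemma derivable_conjD2: "T \<turnstile> Conj \<phi> \<psi> \<Longrightarrow> T \<turnstile> \<psi>"
  by (meson axiom.G3 derivable.ax derivable.mp derivable_conjD1)

lemma derivable_iffD1: "T \<turnstile> Iff \<phi> \<psi> \<Longrightarrow> T \<turnstile> Imp \<phi> \<psi>"
  unfolding Iff_def by (rule derivable_conjD1)

lemma derivable_iffD2: "T \<turnstile> Iff \<phi> \<psi> \<Longrightarrow> T \<turnstile> Imp \<psi> \<phi>"
  unfolding Iff_def by (rule derivable_conjD2)

lemma derivable_imp_trans: "T \<turnstile> Imp \<phi> \<psi> \<Longrightarrow> T \<turnstile> Imp \<psi> \<chi> \<Longrightarrow> T \<turnstile> Imp \<phi> \<chi>"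
  by (meson axiom.G1 derivable.ax derivable.mp)

lemma derivable_curry: "T \<turnstile> Imp (Conj \<phi> \<psi>) \<chi> \<Longrightarrow> T \<turnstile> Imp \<phi> (Imp \<psi> \<chi>)"
  by (meson axiom.G5 derivable.ax derivable.mp derivable_iffD2)

lemma derivable_uncurry: "T \<turnstile> Imp \<phi> (Imp \<psi> \<chi>) \<Longrightarrow> T \<turnstile> Imp (Conj \<phi> \<psi>) \<chi>"
  by (meson axiom.G5 derivable.ax derivable.mp derivable_iffD1)

lemma derivable_imp_swap: "T \<turnstile> Imp \<phi> (Imp \<psi> \<chi>) \<Longrightarrow> T \<turnstile> Imp \<psi> (Imp \<phi> \<chi>)"
  by (meson axiom.G3 derivable.ax derivable_curry derivable_imp_trans derivable_uncurry)

lemma derivable_imp_contract: "T \<turnstile> Imp \<phi> (Imp \<phi> \<chi>) \<Longrightarrow> T \<turnstile> Imp \<phi> \<chi>"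
  by (meson axiom.G4 derivable.ax derivable_imp_trans derivable_uncurry)

lemma derivable_imp_weaken: "T \<turnstile> \<phi> \<Longrightarrow> T \<turnstile> Imp \<psi> \<phi>"
  by (meson axiom.G2 derivable.ax derivable_curry derivable.mp)

lemma derivable_imp_refl: "T \<turnstile> Imp \<phi> \<phi>"
  by (meson axiom.G2 axiom.G4 derivable.ax derivable_imp_trans)

text \<open>Closedness of \<chi> is what makes the generalization step go through (axiom G\<forall>2).\<close>
lemma deduction_theorem:
  assumes "insert \<chi> T \<turnstile> \<theta>" and "fv \<chi> = {}"
  shows "T \<turnstile> Imp \<chi> \<theta>"
  using assms(1)
proof (induction rule: derivable.induct)
  case (ax \<phi>)
  then show ?case by (meson derivable.ax derivable_imp_weaken)
next
  case (hyp \<phi>)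
  then show ?case by (metis derivable.hyp derivable_imp_refl derivable_imp_weaken insertE)
next
  case (mp \<phi> \<psi>)
  then show ?case by (meson derivable_imp_contract derivable_imp_swap derivable_imp_trans)
next
  case (gen \<phi> x)
  have "T \<turnstile> All x (Imp \<chi> \<phi>)" using gen.IH by (rule derivable.gen)
  moreover have "T \<turnstile> Imp (All x (Imp \<chi> \<phi>)) (Imp \<chi> (All x \<phi>))"
    by (rule derivable.ax, rule axiom.GAll2) (simp add: assms(2))
  ultimately show ?case by (rule derivable.mp)
qed

lemma qunit_between_zero:
  assumes "0 < Rep_qunit q"
  obtains r where "0 < Rep_qunit r" and "Rep_qunit r < Rep_qunit q"
proof
  have "Rep_qunit q \<le> 1" using Rep_qunit[of q] by simp
  then have r: "Rep_qunit (Abs_qunit (Rep_qunit q / 2)) = Rep_qunit q / 2"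
    using assms by (simp add: Abs_qunit_inverse)
  show "0 < Rep_qunit (Abs_qunit (Rep_qunit q / 2))"
    and "Rep_qunit (Abs_qunit (Rep_qunit q / 2)) < Rep_qunit q"
    unfolding r using assms by simp_all
qed

lemma strongly_consistentD: "strongly_consistent T \<Longrightarrow> 0 < Rep_qunit r \<Longrightarrow> \<not> T \<turnstile> Cst r"
  unfolding strongly_consistent_def by blast

lemma strongly_consistent_not_prelinear_refuted:
  assumes "strongly_consistent T" "0 < Rep_qunit r" "0 < Rep_qunit s"
    and "T \<turnstile> Imp (Imp \<phi> \<psi>) (Cst r)" and "T \<turnstile> Imp (Imp \<psi> \<phi>) (Cst s)"
  shows False
proof -
  define m where "m = (if Rep_qunit r \<le> Rep_qunit s then r else s)"
  have "T \<turnstile> Imp (Imp \<phi> \<psi>) (Cst m)"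
    using assms(4) by (rule derivable_imp_trans, intro derivable.ax axiom.RGL2a) (simp add: m_def)
  moreover have "T \<turnstile> Imp (Imp \<psi> \<phi>) (Cst m)"
    using assms(5) by (rule derivable_imp_trans, intro derivable.ax axiom.RGL2a) (simp add: m_def)
  ultimately have "T \<turnstile> Cst m" by (meson axiom.G6 derivable.ax derivable.mp)
  moreover have "0 < Rep_qunit m" using assms(2,3) by (simp add: m_def)
  ultimately show False using assms(1) strongly_consistentD by blast
qed

lemma strongly_consistent_not_approx_refuted:
  assumes "strongly_consistent T" "0 < Rep_qunit q" and "T \<turnstile> Imp \<phi> (Cst q)"
    and "\<forall>r. 0 < Rep_qunit r \<longrightarrow> T \<turnstile> Imp (Cst r) \<phi>"
  shows False
proof -
  obtain r where r: "0 < Rep_qunit r" "Rep_qunit r < Rep_qunit q"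
    using qunit_between_zero assms(2) by blast
  have "T \<turnstile> Imp (Cst r) (Cst q)"
    using assms(3,4) r(1) derivable_imp_trans by blast
  moreover have "T \<turnstile> Imp (Imp (Cst r) (Cst q)) (Cst q)"
    using r(2) by (intro derivable_iffD1 derivable.ax axiom.RGL2b)
  ultimately have "T \<turnstile> Cst q" by (rule derivable.mp)
  then show False using assms(1,2) strongly_consistentD by blast
qed

lemma max_strongly_consistent_refutes_nonmember:
  assumes "max_strongly_consistent T" "is_theory T" "sentence \<chi>" "\<chi> \<notin> T"
  obtains r where "0 < Rep_qunit r" and "T \<turnstile> Imp \<chi> (Cst r)"
proof -
  have "is_theory (insert \<chi> T)" using assms(2,3) by (simp add: is_theory_def)
  then have "\<not> strongly_consistent (insert \<chi> T)"
    using assms(1,4) unfolding max_strongly_consistent_def by blast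
  then obtain r where "0 < Rep_qunit r" "insert \<chi> T \<turnstile> Cst r"
    unfolding strongly_consistent_def by blast
  moreover have "fv \<chi> = {}" using assms(3) by (simp add: sentence_def)
  ultimately show thesis using that deduction_theorem by blast
qed

lemma max_strongly_consistent_linear:
  assumes "max_strongly_consistent T" "is_theory T" "sentence \<phi>" "sentence \<psi>"
  shows "Imp \<phi> \<psi> \<in> T \<or> Imp \<psi> \<phi> \<in> T"
proof (rule ccontr)
  assume "\<not> (Imp \<phi> \<psi> \<in> T \<or> Imp \<psi> \<phi> \<in> T)"
  moreover have "sentence (Imp \<phi> \<psi>)" "sentence (Imp \<psi> \<phi>)"
    using assms(3,4) by (auto simp: sentence_def)
  ultimately obtain r s where "0 < Rep_qunit r" "T \<turnstile> Imp (Imp \<phi> \<psi>) (Cst r)"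
    and "0 < Rep_qunit s" "T \<turnstile> Imp (Imp \<psi> \<phi>) (Cst s)"
    using max_strongly_consistent_refutes_nonmember[OF assms(1,2)] by (metis (no_types))
  moreover have "strongly_consistent T"
    using assms(1) unfolding max_strongly_consistent_def by blast
  ultimately show False using strongly_consistent_not_prelinear_refuted by blast
qed

lemma max_strongly_consistent_approx_closed:
  assumes "max_strongly_consistent T" "is_theory T" "sentence \<phi>"
    and "\<forall>r. 0 < Rep_qunit r \<longrightarrow> T \<turnstile> Imp (Cst r) \<phi>"
  shows "\<phi> \<in> T"
proof (rule ccontr)
  assume "\<phi> \<notin> T"
  then obtain q where "0 < Rep_qunit q" "T \<turnstile> Imp \<phi> (Cst q)"
    using max_strongly_consistent_refutes_nonmember assms(1-3) by blast
  then show False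
    using assms(1,4) strongly_consistent_not_approx_refuted
    unfolding max_strongly_consistent_def by blast
qed

lemma linear_approx_closed_imp_max_strongly_consistent:
  assumes "strongly_consistent T"
    and linear: "\<forall>\<phi> \<psi>. sentence \<phi> \<longrightarrow> sentence \<psi> \<longrightarrow> Imp \<phi> \<psi> \<in> T \<or> Imp \<psi> \<phi> \<in> T"
    and approx_closed: "\<forall>\<phi>. sentence \<phi> \<longrightarrow> (\<forall>r. 0 < Rep_qunit r \<longrightarrow> T \<turnstile> Imp (Cst r) \<phi>) \<longrightarrow> \<phi> \<in> T"
  shows "max_strongly_consistent T"
  unfolding max_strongly_consistent_def
proof (intro conjI allI impI)
  fix \<Sigma>
  assume "is_theory \<Sigma>" "strongly_consistent \<Sigma>" "T \<subseteq> \<Sigma>"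
  have "\<phi> \<in> T" if "\<phi> \<in> \<Sigma>" for \<phi>
  proof -
    have "sentence \<phi>" using \<open>is_theory \<Sigma>\<close> that by (simp add: is_theory_def)
    have "T \<turnstile> Imp (Cst r) \<phi>" if r: "0 < Rep_qunit r" for r
    proof -
      have "Imp \<phi> (Cst r) \<notin> T"
      proof
        assume "Imp \<phi> (Cst r) \<in> T"
        with \<open>T \<subseteq> \<Sigma>\<close> \<open>\<phi> \<in> \<Sigma>\<close> have "\<Sigma> \<turnstile> Cst r"
          by (meson derivable.hyp derivable.mp subsetD)
        then show False using \<open>strongly_consistent \<Sigma>\<close> r strongly_consistentD by blast
      qed
      moreover have "sentence (Cst r :: ('p, 'f) fm)" by (simp add: sentence_def)
      ultimately have "Imp (Cst r) \<phi> \<in> T" using linear \<open>sentence \<phi>\<close> by blast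
      then show ?thesis by (rule derivable.hyp)
    qed
    then show ?thesis using approx_closed \<open>sentence \<phi>\<close> by blast
  qed
  then show "\<Sigma> = T" using \<open>T \<subseteq> \<Sigma>\<close> by blast
qed (rule assms(1))

theorem mainTheorem7:
  fixes T :: "('p::countable, 'f::countable) fm set"
  assumes "is_theory T" and "strongly_consistent T"
  shows "max_strongly_consistent T \<longleftrightarrow>
    ((\<forall>\<phi> \<psi>. sentence \<phi> \<longrightarrow> sentence \<psi> \<longrightarrow> Imp \<phi> \<psi> \<in> T \<or> Imp \<psi> \<phi> \<in> T) \<and>
     (\<forall>\<phi>. sentence \<phi> \<longrightarrow> (\<forall>r. 0 < Rep_qunit r \<longrightarrow> T \<turnstile> Imp (Cst r) \<phi>) \<longrightarrow> \<phi> \<in> T))"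
proof
  assume "max_strongly_consistent T"
  then show "(\<forall>\<phi> \<psi>. sentence \<phi> \<longrightarrow> sentence \<psi> \<longrightarrow> Imp \<phi> \<psi> \<in> T \<or> Imp \<psi> \<phi> \<in> T) \<and>
     (\<forall>\<phi>. sentence \<phi> \<longrightarrow> (\<forall>r. 0 < Rep_qunit r \<longrightarrow> T \<turnstile> Imp (Cst r) \<phi>) \<longrightarrow> \<phi> \<in> T)"
    using max_strongly_consistent_linear max_strongly_consistent_approx_closed assms(1)
    by blast
qed (use linear_approx_closed_imp_max_strongly_consistent assms(2) in blast)

end
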